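(* Let $\alpha\in(0,1)$, $\eta>0$, $\gamma>0$, $a>0$ with $a\neq1$, $b\in\mathbb R\setminus\{0\}$, and assume $b^2\neq\frac{(k_1^2-ak_2^2)(ak_1^2-k_2^2)}{(a+1)(k_1^2+k_2^2)}\pi^2$ for all $k_1,k_2\in\mathbb Z$ with $(k_1,k_2)\neq(0,0)$. Then the semigroup of contractions $e^{t\mathcal A}$ is not uniformly (exponentially) stable in the energy space $\mathcal H$.
   Context: Let $\mu(\xi)=|\xi|^{\frac{2\alpha-1}{2}}$ and $\kappa(\alpha)=\frac{\sin(\alpha\pi)}{\pi}$. Let $H^1_L(0,1)=\{u\in H^1(0,1):u(0)=0\}$. $\mathcal H=H^1_L(0,1)\times L^2(0,1)\times H^1_0(0,1)\times L^2(0,1)\times L^2(\mathbb R)$ with inner product $\langle(u,v,y,z,\omega),(\tilde u,\tilde v,\tilde y,\tilde z,\tilde\omega)\rangle_{\mathcal H}=\int_0^1(v\bar{\tilde v}+u_x\bar{\tilde u}_x+z\bar{\tilde z}+a y_x\bar{\tilde y}_x)dx+\gamma\kappa(\alpha)\int_{\mathbb R}\omega\bar{\tilde\omega}\,d\xi$. $D(\mathcal A)$ is the set of $(u,v,y,z,\omega)\in\mathcal H$ with $u\in H^2(0,1)\cap H^1_L(0,1)$, $y\in H^2(0,1)\cap H^1_0(0,1)$, $v\in H^1_L(0,1)$, $z\in H^1_0(0,1)$, $-(\xi^2+\eta)\omega+v(1)\mu(\xi)\in L^2(\mathbb R)$, $|\xi|\omega\in L^2(\mathbb R)$, $u_x(1)+\gamma\kappa(\alpha)\int_{\mathbb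 R}\mu(\xi)\omega(\xi)d\xi=0$, and $\mathcal A(u,v,y,z,\omega)=(v,\,u_{xx}-bz,\,z,\,ay_{xx}+bv,\,-(\xi^2+\eta)\omega+v(1)\mu(\xi))$; $\mathcal A$ generates a $C_0$-semigroup of contractions on $\mathcal H$. *)

theory Defs
  imports "HOL-Analysis.Analysis"
begin

definition L2on :: "real set \<Rightarrow> (real \<Rightarrow> complex) \<Rightarrow> bool" where
  "L2on S f \<longleftrightarrow> f \<in> borel_measurable (lebesgue_on S) \<and>
     integrable (lebesgue_on S) (\<lambda>x. (cmod (f x))^2)"

definition L2norm2 :: "real set \<Rightarrow> (real \<Rightarrow> complex) \<Rightarrow> real" where
  "L2norm2 S f = integral\<^sup>L (lebesgue_on S) (\<lambda>x. (cmod (f x))^2)"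

text \<open>u restricted to [0,1] is absolutely continuous with L2 derivative g
  (u is the continuous representative of an H1(0,1) function).\<close>
definition has_weak_deriv :: "(real \<Rightarrow> complex) \<Rightarrow> (real \<Rightarrow> complex) \<Rightarrow> bool" where
  "has_weak_deriv u g \<longleftrightarrow> L2on {0..1} g \<and>
     (\<forall>x\<in>{0..1}. u x = u 0 + integral\<^sup>L (lebesgue_on {0..x}) g)"

definition H1 :: "(real \<Rightarrow> complex) \<Rightarrow> bool" where
  "H1 u \<longleftrightarrow> (\<exists>g. has_weak_deriv u g)"

definition wderiv :: "(real \<Rightarrow> complex) \<Rightarrow> (real \<Rightarrow> complex)" where
  "wderiv u = (SOME g. has_weak_deriv u g)"

definition H1L :: "(real \<Rightarrow> complex) \<Rightarrow> bool" where
  "H1L u \<longleftrightarrow> H1 u \<and> u 0 = 0"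

definition H10 :: "(real \<Rightarrow> complex) \<Rightarrow> bool" where
  "H10 u \<longleftrightarrow> H1 u \<and> u 0 = 0 \<and> u 1 = 0"

definition H2 :: "(real \<Rightarrow> complex) \<Rightarrow> bool" where
  "H2 u \<longleftrightarrow> (\<exists>g. has_weak_deriv u g \<and> H1 g)"

text \<open>u_x(1) for u in H2: value at 1 of the continuous (H1) representative of u_x.\<close>
definition dx_at1 :: "(real \<Rightarrow> complex) \<Rightarrow> complex" where
  "dx_at1 u = (SOME c. \<exists>g. has_weak_deriv u g \<and> H1 g \<and> g 1 = c)"

definition wderiv2 :: "(real \<Rightarrow> complex) \<Rightarrow> (real \<Rightarrow> complex)" where
  "wderiv2 u = wderiv (SOME g. has_weak_deriv u g \<and> H1 g)"

definition mu :: "real \<Rightarrow> real \<Rightarrow> real" where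
  "mu \<alpha> \<xi> = \<bar>\<xi>\<bar> powr ((2*\<alpha> - 1)/2)"

definition kappa :: "real \<Rightarrow> real" where
  "kappa \<alpha> = sin (\<alpha>*pi) / pi"

type_synonym st = "(real \<Rightarrow> complex) \<times> (real \<Rightarrow> complex) \<times> (real \<Rightarrow> complex)
   \<times> (real \<Rightarrow> complex) \<times> (real \<Rightarrow> complex)"

fun st_add :: "st \<Rightarrow> st \<Rightarrow> st" where
  "st_add (u,v,y,z,w) (u',v',y',z',w') =
     (\<lambda>x. u x + u' x, \<lambda>x. v x + v' x, \<lambda>x. y x + y' x, \<lambda>x. z x + z' x, \<lambda>x. w x + w' x)"

fun st_scale :: "complex \<Rightarrow> st \<Rightarrow> st" where
  "st_scale c (u,v,y,z,w) =
     (\<lambda>x. c * u x, \<lambda>x. c * v x, \<lambda>x. c * y x, \<lambda>x. c * z x, \<lambda>x. c * w x)"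

definition st_diff :: "st \<Rightarrow> st \<Rightarrow> st" where
  "st_diff p q = st_add p (st_scale (-1) q)"

fun in_H :: "st \<Rightarrow> bool" where
  "in_H (u,v,y,z,w) \<longleftrightarrow> H1L u \<and> L2on {0..1} v \<and> H10 y \<and> L2on {0..1} z \<and> L2on UNIV w"

fun Hnorm :: "real \<Rightarrow> real \<Rightarrow> real \<Rightarrow> st \<Rightarrow> real" where
  "Hnorm a \<gamma> \<alpha> (u,v,y,z,w) = sqrt (L2norm2 {0..1} v + L2norm2 {0..1} (wderiv u)
      + L2norm2 {0..1} z + a * L2norm2 {0..1} (wderiv y) + \<gamma> * kappa \<alpha> * L2norm2 UNIV w)"

fun in_DA :: "real \<Rightarrow> real \<Rightarrow> real \<Rightarrow> st \<Rightarrow> bool" where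
  "in_DA \<gamma> \<alpha> \<eta> (u,v,y,z,w) \<longleftrightarrow> in_H (u,v,y,z,w) \<and>
     H2 u \<and> H1L u \<and> H2 y \<and> H10 y \<and> H1L v \<and> H10 z \<and>
     L2on UNIV (\<lambda>\<xi>. - complex_of_real (\<xi>^2 + \<eta>) * w \<xi> + v 1 * complex_of_real (mu \<alpha> \<xi>)) \<and>
     L2on UNIV (\<lambda>\<xi>. complex_of_real \<bar>\<xi>\<bar> * w \<xi>) \<and>
     integrable lebesgue (\<lambda>\<xi>. complex_of_real (mu \<alpha> \<xi>) * w \<xi>) \<and>
     dx_at1 u + complex_of_real (\<gamma> * kappa \<alpha>) *
        integral\<^sup>L lebesgue (\<lambda>\<xi>. complex_of_real (mu \<alpha> \<xi>) * w \<xi>) = 0"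

fun opA :: "real \<Rightarrow> real \<Rightarrow> real \<Rightarrow> real \<Rightarrow> st \<Rightarrow> st" where
  "opA a b \<alpha> \<eta> (u,v,y,z,w) =
     (v, \<lambda>x. wderiv2 u x - complex_of_real b * z x, z,
      \<lambda>x. complex_of_real a * wderiv2 y x + complex_of_real b * v x,
      \<lambda>\<xi>. - complex_of_real (\<xi>^2 + \<eta>) * w \<xi> + v 1 * complex_of_real (mu \<alpha> \<xi>))"

text \<open>T is a C0-semigroup of contractions on the (semi)normed space (Hs, N) whose
  generator is (D, A); everything is understood up to N-null differences
  (i.e. on equivalence classes of a.e. equal functions).\<close>
definition C0_contraction_sg_gen ::
  "(st \<Rightarrow> bool) \<Rightarrow> (st \<Rightarrow> real) \<Rightarrow> (st \<Rightarrow> bool) \<Rightarrow> (st \<Rightarrow> st) \<Rightarrow> (real \<Rightarrow> st \<Rightarrow> st) \<Rightarrow> bool" where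
  "C0_contraction_sg_gen Hs N D A T \<longleftrightarrow>
     (\<forall>t\<ge>0. \<forall>x. Hs x \<longrightarrow> Hs (T t x)) \<and>
     (\<forall>x. Hs x \<longrightarrow> N (st_diff (T 0 x) x) = 0) \<and>
     (\<forall>t\<ge>0. \<forall>s\<ge>0. \<forall>x. Hs x \<longrightarrow> N (st_diff (T (t+s) x) (T t (T s x))) = 0) \<and>
     (\<forall>t\<ge>0. \<forall>x y c. Hs x \<longrightarrow> Hs y \<longrightarrow>
        N (st_diff (T t (st_add x (st_scale c y))) (st_add (T t x) (st_scale c (T t y)))) = 0) \<and>
     (\<forall>t\<ge>0. \<forall>x. Hs x \<longrightarrow> N (T t x) \<le> N x) \<and>
     (\<forall>x. Hs x \<longrightarrow> ((\<lambda>t. N (st_diff (T t x) x)) \<longlongrightarrow> 0) (at_right 0)) \<and>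
     (\<forall>x. Hs x \<longrightarrow>
        ((\<exists>w. Hs w \<and> ((\<lambda>h. N (st_diff (st_scale (complex_of_real (1/h)) (st_diff (T h x) x)) w))
                          \<longlongrightarrow> 0) (at_right 0))
         \<longleftrightarrow> (\<exists>x'. D x' \<and> N (st_diff x x') = 0))) \<and>
     (\<forall>x. D x \<longrightarrow>
        ((\<lambda>h. N (st_diff (st_scale (complex_of_real (1/h)) (st_diff (T h x) x)) (A x)))
            \<longlongrightarrow> 0) (at_right 0))"

definition unif_exp_stable :: "(st \<Rightarrow> bool) \<Rightarrow> (st \<Rightarrow> real) \<Rightarrow> (real \<Rightarrow> st \<Rightarrow> st) \<Rightarrow> bool" where
  "unif_exp_stable Hs N T \<longleftrightarrow>
     (\<exists>M \<omega>. M > 0 \<and> \<omega> > 0 \<and> (\<forall>t\<ge>0. \<forall>x. Hs x \<longrightarrow> N (T t x) \<le> M * exp (- \<omega> * t) * N x))"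

end

theory Submission
  imports Defs
begin

(* Uniform exponential stability of a contraction semigroup forces a uniform bound on the
  resolvent along the imaginary axis: since N(T t x - e^(i l t) x) <= t N(A x - i l x), choosing
  t0 with M e^(-omega t0) <= 1/2 gives N x <= 2 t0 N(A x - i l x).
  For a = s^2 with s <> 1 this bound fails on quasimodes of frequency lam = n pi s that never
  feel the fractional boundary damping: y = sin(n pi x) solves the second wave equation
  exactly, and u = i (c1 sin(n pi x) + c2 sin(m pi x)) with m = ceiling(n s) absorbs the coupling
  term and satisfies u_x(1) = 0, so w = 0 and v(1) = 0.  The residual (A - i lam) X stays bounded
  as n grows while the energy of X is at least lam / sqrt 2. *)

lemma st_diff_via: "st_diff p q = st_add (st_diff p r) (st_diff r q)"
  by (cases p rule: prod_cases5, cases q rule: prod_cases5, cases r rule: prod_cases5)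
     (simp add: st_diff_def fun_eq_iff)

lemma st_diff_commute: "st_diff q p = st_scale (-1) (st_diff p q)"
  by (cases p rule: prod_cases5, cases q rule: prod_cases5) (simp add: st_diff_def fun_eq_iff)

lemma st_add_diff_cancel: "st_add q (st_diff p q) = p"
  by (cases p rule: prod_cases5, cases q rule: prod_cases5) (simp add: st_diff_def fun_eq_iff)

lemma st_diff_add_cancel: "st_add (st_diff p q) q = p"
  by (cases p rule: prod_cases5, cases q rule: prod_cases5) (simp add: st_diff_def fun_eq_iff)

lemma st_scale_one [simp]: "st_scale 1 p = p"
  by (cases p rule: prod_cases5) (simp add: fun_eq_iff)

lemma st_diff_add_scale:
  "st_diff (st_add p (st_scale c q)) (st_scale (c * d) x)
   = st_add p (st_scale c (st_diff q (st_scale d x)))"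
  by (cases p rule: prod_cases5, cases q rule: prod_cases5, cases x rule: prod_cases5)
     (simp add: st_diff_def fun_eq_iff algebra_simps)

lemma st_scale_diff_split:
  assumes "h \<noteq> 0"
  shows "st_scale (complex_of_real (1/h)) (st_diff p (st_scale c x)) =
    st_add (st_add (st_diff (st_scale (complex_of_real (1/h)) (st_diff p x)) q)
                   (st_diff q (st_scale l x)))
           (st_scale (l - (c - 1) / complex_of_real h) x)"
  using assms
  by (cases p rule: prod_cases5, cases q rule: prod_cases5, cases x rule: prod_cases5)
     (simp add: st_diff_def fun_eq_iff field_simps)

section \<open>Contraction semigroups and the resolvent on the imaginary axis\<close>

locale seminormed_state_space =
  fixes Hs :: "st \<Rightarrow> bool" and N :: "st \<Rightarrow> real"
  assumes add_closed: "Hs p \<Longrightarrow> Hs q \<Longrightarrow> Hs (st_add p q)"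
    and scale_closed: "Hs p \<Longrightarrow> Hs (st_scale c p)"
    and triangle: "Hs p \<Longrightarrow> Hs q \<Longrightarrow> N (st_add p q) \<le> N p + N q"
    and homogeneous: "Hs p \<Longrightarrow> N (st_scale c p) = cmod c * N p"
    and nonneg: "0 \<le> N p"
begin

lemma diff_closed: "Hs p \<Longrightarrow> Hs q \<Longrightarrow> Hs (st_diff p q)"
  unfolding st_diff_def by (intro add_closed scale_closed)

lemma diff_triangle:
  assumes "Hs p" "Hs q" "Hs r"
  shows "N (st_diff p q) \<le> N (st_diff p r) + N (st_diff r q)"
  using triangle[OF diff_closed diff_closed] assms by (subst st_diff_via[of p q r]) blast

lemma diff_commute: "Hs p \<Longrightarrow> Hs q \<Longrightarrow> N (st_diff q p) = N (st_diff p q)"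
  using homogeneous[OF diff_closed, of p q "-1"] by (simp add: st_diff_commute[of q p])

lemma le_add_diff: "Hs p \<Longrightarrow> Hs q \<Longrightarrow> N p \<le> N q + N (st_diff p q)"
  using triangle[OF _ diff_closed, of q p q] by (simp add: st_add_diff_cancel)

end

definition resolvent_bounded_on_imag_axis ::
  "(st \<Rightarrow> bool) \<Rightarrow> (st \<Rightarrow> real) \<Rightarrow> (st \<Rightarrow> bool) \<Rightarrow> (st \<Rightarrow> st) \<Rightarrow> bool" where
  "resolvent_bounded_on_imag_axis Hs N D A \<longleftrightarrow>
     (\<exists>C. \<forall>x l. D x \<longrightarrow> Hs x \<longrightarrow> Hs (A x) \<longrightarrow>
        N x \<le> C * N (st_diff (A x) (st_scale (\<i> * complex_of_real l) x)))"

lemma tendsto_exp_difference_quotient: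
  fixes c :: complex
  shows "((\<lambda>h. (exp (c * complex_of_real h) - 1) / complex_of_real h) \<longlongrightarrow> c) (at_right 0)"
proof -
  have "((\<lambda>z. exp (c * z)) has_field_derivative c) (at 0)"
    by (auto intro!: derivative_eq_intros)
  then have lim: "((\<lambda>z. (exp (c * z) - 1) / z) \<longlongrightarrow> c) (at 0)"
    by (simp add: has_field_derivative_iff)
  have "filterlim complex_of_real (at 0) (at_right 0)"
    unfolding filterlim_at
    by (auto intro!: tendsto_eq_intros eventually_mono[OF eventually_at_right_less[of 0]])
  from filterlim_compose[OF lim this] show ?thesis by simp
qed

locale contraction_semigroup = seminormed_state_space +
  fixes D :: "st \<Rightarrow> bool" and A :: "st \<Rightarrow> st" and T :: "real \<Rightarrow> st \<Rightarrow> st"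
  assumes C0: "C0_contraction_sg_gen Hs N D A T"
begin

lemma T_closed: "0 \<le> t \<Longrightarrow> Hs x \<Longrightarrow> Hs (T t x)"
  using C0 unfolding C0_contraction_sg_gen_def by (simp del: split_paired_All split_paired_Ex)

lemma T_zero: "Hs x \<Longrightarrow> N (st_diff (T 0 x) x) = 0"
  using C0 unfolding C0_contraction_sg_gen_def by (simp del: split_paired_All split_paired_Ex)

lemma T_add: "0 \<le> t \<Longrightarrow> 0 \<le> s \<Longrightarrow> Hs x \<Longrightarrow> N (st_diff (T (t + s) x) (T t (T s x))) = 0"
  using C0 unfolding C0_contraction_sg_gen_def by (simp del: split_paired_All split_paired_Ex)

lemma T_linear: "0 \<le> t \<Longrightarrow> Hs x \<Longrightarrow> Hs y \<Longrightarrow>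
    N (st_diff (T t (st_add x (st_scale c y))) (st_add (T t x) (st_scale c (T t y)))) = 0"
  using C0 unfolding C0_contraction_sg_gen_def by (simp del: split_paired_All split_paired_Ex)

lemma T_contraction: "0 \<le> t \<Longrightarrow> Hs x \<Longrightarrow> N (T t x) \<le> N x"
  using C0 unfolding C0_contraction_sg_gen_def by (simp del: split_paired_All split_paired_Ex)

lemma T_generator: "D x \<Longrightarrow>
   ((\<lambda>h. N (st_diff (st_scale (complex_of_real (1/h)) (st_diff (T h x) x)) (A x))) \<longlongrightarrow> 0) (at_right 0)"
  using C0 unfolding C0_contraction_sg_gen_def by (simp del: split_paired_All split_paired_Ex)

lemma dist_rotation_eventually_le:
  assumes "D x" "Hs x" "Hs (A x)" "0 < \<delta>"
  shows "\<forall>\<^sub>F h in at_right 0. N (st_diff (T h x) (st_scale (exp (\<i> * complex_of_real (l * h))) x))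
            \<le> h * (N (st_diff (A x) (st_scale (\<i> * complex_of_real l) x)) + \<delta>)"
proof -
  define L where "L = \<i> * complex_of_real l"
  define r where "r = st_diff (A x) (st_scale L x)"
  have "Hs r" unfolding r_def using assms by (intro diff_closed scale_closed)
  have "((\<lambda>h. L - (exp (L * complex_of_real h) - 1) / complex_of_real h) \<longlongrightarrow> 0) (at_right 0)"
    using tendsto_diff[OF tendsto_const[of L] tendsto_exp_difference_quotient[of L]] by simp
  then have "((\<lambda>h. cmod (L - (exp (L * complex_of_real h) - 1) / complex_of_real h) * N x) \<longlongrightarrow> 0) (at_right 0)"
    by (intro tendsto_mult_left_zero tendsto_norm_zero)
  then have quotient: "\<forall>\<^sub>F h in at_right 0. cmod (L - (exp (L * complex_of_real h) - 1) / complex_of_real h) * N x < \<delta>/2"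
    using assms(4) by (intro order_tendstoD(2)) auto
  have generator: "\<forall>\<^sub>F h in at_right 0. N (st_diff (st_scale (complex_of_real (1/h)) (st_diff (T h x) x)) (A x)) < \<delta>/2"
    using T_generator[OF assms(1)] assms(4) by (intro order_tendstoD(2)) auto
  show ?thesis
    using quotient generator eventually_at_right_less[of 0]
  proof eventually_elim
    case (elim h)
    define E where "E = exp (L * complex_of_real h)"
    define P where "P = st_diff (st_scale (complex_of_real (1/h)) (st_diff (T h x) x)) (A x)"
    have "Hs (T h x)" using T_closed elim assms by auto
    then have "Hs P" "Hs (st_diff (T h x) (st_scale E x))"
      unfolding P_def using assms by (auto intro!: diff_closed scale_closed)
    have "(1/h) * N (st_diff (T h x) (st_scale E x))
        = N (st_scale (complex_of_real (1/h)) (st_diff (T h x) (st_scale E x)))"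
      using homogeneous[OF \<open>Hs (st_diff (T h x) (st_scale E x))\<close>] elim by (simp del: of_real_divide)
    also have "\<dots> = N (st_add (st_add P r) (st_scale (L - (E - 1) / complex_of_real h) x))"
      unfolding P_def r_def using st_scale_diff_split[of h "T h x" E x "A x" L] elim by simp
    also have "\<dots> \<le> N P + N r + cmod (L - (E - 1) / complex_of_real h) * N x"
      using triangle[OF add_closed[OF \<open>Hs P\<close> \<open>Hs r\<close>] scale_closed[OF assms(2), of "L - (E - 1) / complex_of_real h"]]
        triangle[OF \<open>Hs P\<close> \<open>Hs r\<close>] homogeneous[OF assms(2), of "L - (E - 1) / complex_of_real h"]
      by fastforce
    also have "\<dots> \<le> N r + \<delta>" using elim unfolding P_def E_def by simp
    finally show ?case
      using elim unfolding E_def r_def L_def by (simp add: field_simps mult.commute mult.left_commute)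
  qed
qed

lemma dist_rotation_iterate_le:
  assumes x: "Hs x" and h: "0 \<le> h" and E: "cmod E = 1"
  shows "N (st_diff (T (real k * h) x) (st_scale (E ^ k) x)) \<le> real k * N (st_diff (T h x) (st_scale E x))"
proof (induction k)
  case 0
  then show ?case using T_zero[OF x] by simp
next
  case (Suc k)
  define t where "t = real k * h"
  define d where "d = st_diff (T h x) (st_scale E x)"
  define c where "c = st_add (T t d) (st_scale E (T t x))"
  have t: "0 \<le> t" unfolding t_def using h by simp
  have Th: "Hs (T h x)" using T_closed h x by auto
  have d: "Hs d" unfolding d_def by (intro diff_closed scale_closed Th x)
  have Tt: "Hs y \<Longrightarrow> Hs (T t y)" for y using T_closed t by auto
  have c: "Hs c" unfolding c_def by (intro add_closed scale_closed Tt d x)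
  have Ek: "Hs (st_scale (E ^ Suc k) x)" using scale_closed x by auto
  have "N (st_diff (T (t + h) x) (st_scale (E ^ Suc k) x))
      \<le> N (st_diff (T (t + h) x) (T t (T h x))) + N (st_diff (T t (T h x)) c) + N (st_diff c (st_scale (E ^ Suc k) x))"
    using diff_triangle[OF T_closed Ek Tt[OF Th], of "t + h" x] diff_triangle[OF Tt[OF Th] Ek c] t h x by force
  also have "N (st_diff (T (t + h) x) (T t (T h x))) = 0" using T_add t h x by auto
  also have "N (st_diff (T t (T h x)) c) = 0"
    using T_linear[OF t d x, of E] unfolding c_def d_def st_diff_add_cancel .
  also have "st_diff c (st_scale (E ^ Suc k) x) = st_add (T t d) (st_scale E (st_diff (T t x) (st_scale (E ^ k) x)))"
    unfolding c_def by (simp add: st_diff_add_scale)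
  also have "N \<dots> \<le> N (T t d) + N (st_diff (T t x) (st_scale (E ^ k) x))"
    using triangle[OF Tt[OF d] scale_closed[OF diff_closed[OF Tt[OF x] scale_closed[OF x]]], of E "E ^ k"]
      homogeneous[OF diff_closed[OF Tt[OF x] scale_closed[OF x]], of E "E ^ k"] E by simp
  also have "\<dots> \<le> N d + real k * N d"
    using T_contraction[OF t d] Suc.IH unfolding t_def d_def by simp
  finally show ?case unfolding t_def d_def by (simp add: algebra_simps)
qed

lemma dist_rotation_le:
  assumes "D x" "Hs x" "Hs (A x)" "0 < t"
  shows "N (st_diff (T t x) (st_scale (exp (\<i> * complex_of_real (l * t))) x))
       \<le> t * N (st_diff (A x) (st_scale (\<i> * complex_of_real l) x))"
    (is "?dist t \<le> t * ?res")
proof (rule field_le_epsilon)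
  fix \<epsilon> :: real assume "0 < \<epsilon>"
  then obtain h0 where h0: "0 < h0" "\<And>h. 0 < h \<Longrightarrow> h < h0 \<Longrightarrow> ?dist h \<le> h * (?res + \<epsilon> / t)"
    using dist_rotation_eventually_le[OF assms(1-3), of "\<epsilon> / t" l] assms(4)
    unfolding eventually_at_right_field by auto
  obtain k :: nat where k: "t / h0 < real k" using reals_Archimedean2 by blast
  have "0 < real k" using k assms(4) h0(1) by (smt (verit) divide_pos_pos)
  define h where "h = t / real k"
  have h: "0 < h" "h < h0" "real k * h = t"
    unfolding h_def using k \<open>0 < real k\<close> h0(1) assms(4) by (auto simp: field_simps)
  define E where "E = exp (\<i> * complex_of_real (l * h))"
  have "cmod E = 1" unfolding E_def by (metis norm_exp_i_times of_real_mult mult.commute)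
  have "E ^ k = exp (\<i> * complex_of_real (l * t))"
    unfolding E_def exp_of_nat_mult[symmetric] h(3)[symmetric] by (simp add: algebra_simps)
  then have "?dist t \<le> real k * N (st_diff (T h x) (st_scale E x))"
    using dist_rotation_iterate_le[OF assms(2) _ \<open>cmod E = 1\<close>, of h k] h by simp
  also have "\<dots> \<le> real k * (h * (?res + \<epsilon> / t))"
    using h0(2)[OF h(1,2)] unfolding E_def by (intro mult_left_mono) auto
  also have "\<dots> = (real k * h) * (?res + \<epsilon> / t)" by (simp only: mult.assoc)
  also have "\<dots> = t * ?res + \<epsilon>" using h(3) assms(4) by (simp add: distrib_left)
  finally show "?dist t \<le> t * ?res + \<epsilon>" .
qed

lemma resolvent_bounded_if_unif_exp_stable:
  assumes "unif_exp_stable Hs N T"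
  shows "resolvent_bounded_on_imag_axis Hs N D A"
proof -
  obtain M \<omega> where M: "0 < M" "0 < \<omega>"
    and decay: "\<And>t x. 0 \<le> t \<Longrightarrow> Hs x \<Longrightarrow> N (T t x) \<le> M * exp (- \<omega> * t) * N x"
    using assms unfolding unif_exp_stable_def by blast
  define t0 where "t0 = (\<bar>ln (2 * M)\<bar> + 1) / \<omega>"
  have t0: "0 < t0" unfolding t0_def using M by simp
  have "2 * M = exp (ln (2 * M))" using M by simp
  also have "\<dots> < exp (\<omega> * t0)" unfolding exp_less_cancel_iff t0_def using M by simp
  finally have half: "M * exp (- \<omega> * t0) \<le> 1/2"
    using M by (simp add: exp_minus field_simps)
  have "N x \<le> 2 * t0 * N (st_diff (A x) (st_scale (\<i> * complex_of_real l) x))"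
    if "D x" "Hs x" "Hs (A x)" for x l
  proof -
    define E where "E = exp (\<i> * complex_of_real (l * t0))"
    have "cmod E = 1" unfolding E_def by (metis norm_exp_i_times of_real_mult mult.commute)
    have Tx: "Hs (T t0 x)" using T_closed t0 that by auto
    have Ex: "Hs (st_scale E x)" using scale_closed that by auto
    have "N x = N (st_scale E x)" using homogeneous[OF \<open>Hs x\<close>] \<open>cmod E = 1\<close> by simp
    also have "\<dots> \<le> N (T t0 x) + N (st_diff (T t0 x) (st_scale E x))"
      using le_add_diff[OF Ex Tx] diff_commute[OF Tx Ex] by simp
    also have "\<dots> \<le> 1/2 * N x + t0 * N (st_diff (A x) (st_scale (\<i> * complex_of_real l) x))"
      using decay[OF less_imp_le[OF t0] \<open>Hs x\<close>] mult_right_mono[OF half nonneg[of x]]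
        dist_rotation_le[OF that t0, of l] unfolding E_def by linarith
    finally show ?thesis by simp
  qed
  then show ?thesis unfolding resolvent_bounded_on_imag_axis_def by blast
qed

end

lemma cmod_add_sq_le:
  fixes x y :: complex assumes "0 < t"
  shows "(cmod (x + y))^2 \<le> (1 + t) * (cmod x)^2 + (1 + 1/t) * (cmod y)^2"
proof -
  have "0 \<le> (t * cmod x - cmod y)^2 / t" using assms by simp
  then have "2 * cmod x * cmod y \<le> t * (cmod x)^2 + (cmod y)^2 / t"
    using assms by (simp add: power2_eq_square field_simps)
  moreover have "(cmod (x + y))^2 \<le> (cmod x + cmod y)^2"
    by (intro power_mono norm_triangle_ineq) auto
  ultimately show ?thesis by (simp add: power2_eq_square field_simps)
qed

lemma L2on_add: "L2on S f \<Longrightarrow> L2on S g \<Longrightarrow> L2on S (\<lambda>x. f x + g x)"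
proof -
  assume f: "L2on S f" and g: "L2on S g"
  have [measurable]: "f \<in> borel_measurable (lebesgue_on S)" "g \<in> borel_measurable (lebesgue_on S)"
    using f g by (auto simp: L2on_def)
  have "integrable (lebesgue_on S) (\<lambda>x. 2 * (cmod (f x))^2 + 2 * (cmod (g x))^2)"
    using f g by (simp add: L2on_def)
  then have "integrable (lebesgue_on S) (\<lambda>x. (cmod (f x + g x))^2)"
    by (rule Bochner_Integration.integrable_bound) (use cmod_add_sq_le[of 1] in \<open>auto intro!: AE_I2\<close>)
  then show ?thesis by (simp add: L2on_def)
qed

lemma L2on_cmult: "L2on S f \<Longrightarrow> L2on S (\<lambda>x. c * f x)"
  unfolding L2on_def by (auto simp: norm_mult power_mult_distrib)

lemma L2on_diff: "L2on S f \<Longrightarrow> L2on S g \<Longrightarrow> L2on S (\<lambda>x. f x - g x)"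
  using L2on_add[of S f "\<lambda>x. -1 * g x"] L2on_cmult[of S g "-1"] by simp

lemma L2on_zero [simp]: "L2on S (\<lambda>x. 0)"
  by (simp add: L2on_def)

lemma L2on_continuous_on: "continuous_on {0..1} f \<Longrightarrow> L2on {0..1} f"
  unfolding L2on_def
  by (auto intro!: continuous_imp_measurable_on_sets_lebesgue continuous_imp_integrable_real
      continuous_intros)

lemma L2on_integrable:
  assumes "L2on {0..1} g"
  shows "integrable (lebesgue_on {0..1}) g"
proof (rule Bochner_Integration.integrable_bound)
  show "integrable (lebesgue_on {0..1}) (\<lambda>x. 1 + (cmod (g x))^2)"
    using assms continuous_imp_integrable_real[of 0 1 "\<lambda>x. 1::real"]
    by (intro Bochner_Integration.integrable_add) (auto simp: L2on_def)
  have "cmod z \<le> 1 + (cmod z)^2" for z :: complex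
  proof -
    have "2 * cmod z \<le> 1 + (cmod z)^2"
      using zero_le_power2[of "cmod z - 1"] by (simp add: power2_eq_square algebra_simps)
    then show ?thesis using norm_ge_zero[of z] by linarith
  qed
  then show "AE x in lebesgue_on {0..1}. norm (g x) \<le> norm (1 + (cmod (g x))^2)"
    by (auto intro!: AE_I2)
qed (use assms in \<open>simp add: L2on_def\<close>)

lemma L2on_integrable_indicator:
  assumes "L2on {0..1} g" "x \<in> {0..1}"
  shows "integrable lebesgue (\<lambda>t. indicator {0..x} t *\<^sub>R g t)"
proof -
  have "integrable lebesgue (\<lambda>t. indicator {0..1} t *\<^sub>R g t)"
    using L2on_integrable[OF assms(1)] by (simp add: integrable_restrict_space)
  then have "integrable lebesgue (\<lambda>t. indicator {0..x} t *\<^sub>R indicator {0..1} t *\<^sub>R g t)"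
    by (rule integrable_mult_indicator[rotated]) simp
  also have "(\<lambda>t. indicator {0..x} t *\<^sub>R indicator {0..1} t *\<^sub>R g t) = (\<lambda>t. indicator {0..x} t *\<^sub>R g t)"
    using assms(2) by (auto simp: fun_eq_iff split: split_indicator)
  finally show ?thesis .
qed

lemma L2on_integrable_on_interval:
  "L2on {0..1} g \<Longrightarrow> x \<in> {0..1} \<Longrightarrow> integrable (lebesgue_on {0..x}) g"
  using L2on_integrable_indicator by (simp add: integrable_restrict_space)

lemma L2norm2_nonneg: "0 \<le> L2norm2 S f"
  unfolding L2norm2_def by (rule integral_nonneg_AE) auto

lemma L2norm2_zero [simp]: "L2norm2 S (\<lambda>x. 0) = 0"
  by (simp add: L2norm2_def)

lemma L2norm2_cmult: "L2norm2 S (\<lambda>x. c * f x) = (cmod c)^2 * L2norm2 S f"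
  unfolding L2norm2_def by (simp add: norm_mult power_mult_distrib)

lemma L2norm2_add_le:
  assumes f: "L2on S f" and g: "L2on S g" and t: "0 < t"
  shows "L2norm2 S (\<lambda>x. f x + g x) \<le> (1 + t) * L2norm2 S f + (1 + 1/t) * L2norm2 S g"
proof -
  have "L2norm2 S (\<lambda>x. f x + g x)
      \<le> integral\<^sup>L (lebesgue_on S) (\<lambda>x. (1 + t) * (cmod (f x))^2 + (1 + 1/t) * (cmod (g x))^2)"
    unfolding L2norm2_def using L2on_add[OF f g] f g
    by (intro integral_mono cmod_add_sq_le t) (auto simp: L2on_def)
  also have "\<dots> = (1 + t) * L2norm2 S f + (1 + 1/t) * L2norm2 S g"
    unfolding L2norm2_def using f g by (simp add: L2on_def)
  finally show ?thesis .
qed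

lemma L2norm2_cong_AE:
  assumes "L2on S f" "L2on S g" "AE x in lebesgue_on S. f x = g x"
  shows "L2norm2 S f = L2norm2 S g"
  unfolding L2norm2_def
  by (rule integral_cong_AE) (use assms in \<open>auto simp: L2on_def elim: eventually_mono\<close>)

lemma L2norm2_le_sq_bound:
  assumes "continuous_on {0..1} f" and "\<And>t. t \<in> {0..1} \<Longrightarrow> cmod (f t) \<le> K"
  shows "L2norm2 {0..1} f \<le> K^2"
proof -
  have "L2norm2 {0..1} f \<le> integral\<^sup>L (lebesgue_on {0..1}) (\<lambda>t::real. K^2)"
    unfolding L2norm2_def
  proof (rule integral_mono)
    show "integrable (lebesgue_on {0..1}) (\<lambda>x. (cmod (f x))^2)"
      using L2on_continuous_on[OF assms(1)] by (simp add: L2on_def)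
    show "(cmod (f t))^2 \<le> K^2" if "t \<in> space (lebesgue_on {0..1})" for t
      using assms(2) that by (intro power_mono) auto
  qed (auto intro: continuous_imp_integrable_real)
  also have "\<dots> = K^2" by (simp add: measure_restrict_space)
  finally show ?thesis .
qed

section \<open>Weak derivatives on the unit interval\<close>

lemma emeasure_density_greaterThan:
  fixes h :: "real \<Rightarrow> real"
  assumes "integrable lborel h" and "\<And>t. 0 \<le> h t"
  shows "emeasure (density lborel (\<lambda>t. ennreal (h t))) {a<..}
    = ennreal (integral\<^sup>L lborel (\<lambda>t. h t * indicator {a<..} t))"
proof -
  have [measurable]: "h \<in> borel_measurable lborel" using assms(1) by measurable
  have "emeasure (density lborel (\<lambda>t. ennreal (h t))) {a<..}
      = (\<integral>\<^sup>+ t. ennreal (h t) * indicator {a<..} t \<partial>lborel)"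
    by (subst emeasure_density) auto
  also have "\<dots> = (\<integral>\<^sup>+ t. ennreal (h t * indicator {a<..} t) \<partial>lborel)"
    by (intro nn_integral_cong) (auto split: split_indicator)
  also have "\<dots> = ennreal (integral\<^sup>L lborel (\<lambda>t. h t * indicator {a<..} t))"
    by (intro nn_integral_eq_integral integrable_real_mult_indicator assms) (auto simp: assms(2))
  finally show ?thesis .
qed

lemma AE_zero_if_integral_greaterThan_zero:
  fixes g :: "real \<Rightarrow> real"
  assumes int: "integrable lborel g"
    and zero: "\<And>a. integral\<^sup>L lborel (\<lambda>t. indicator {a<..} t * g t) = 0"
  shows "AE t in lborel. g t = 0"
proof -
  \<comment> \<open>The positive and negative parts of g are densities of the same measure.\<close>
  define gp where "gp t = max (g t) 0" for t
  define gn where "gn t = max (- g t) 0" for t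
  have [measurable]: "g \<in> borel_measurable lborel" using int by measurable
  have igp: "integrable lborel gp" unfolding gp_def using int by auto
  have ign: "integrable lborel gn" unfolding gn_def using int by auto
  have [measurable]: "gp \<in> borel_measurable lborel" unfolding gp_def by measurable
  have [measurable]: "gn \<in> borel_measurable lborel" unfolding gn_def by measurable
  have eq: "integral\<^sup>L lborel (\<lambda>t. gp t * indicator {a<..} t) = integral\<^sup>L lborel (\<lambda>t. gn t * indicator {a<..} t)"
    for a
  proof -
    have "integral\<^sup>L lborel (\<lambda>t. gp t * indicator {a<..} t) - integral\<^sup>L lborel (\<lambda>t. gn t * indicator {a<..} t)
        = integral\<^sup>L lborel (\<lambda>t. gp t * indicator {a<..} t - gn t * indicator {a<..} t)"
      using Bochner_Integration.integral_diff[OF integrable_real_mult_indicator[OF _ igp]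
          integrable_real_mult_indicator[OF _ ign], of "{a<..}" "{a<..}"] by simp
    also have "\<dots> = integral\<^sup>L lborel (\<lambda>t. indicator {a<..} t * g t)"
      by (intro Bochner_Integration.integral_cong) (auto simp: gp_def gn_def split: split_indicator)
    also have "\<dots> = 0" by (rule zero)
    finally show ?thesis by simp
  qed
  have "density lborel (\<lambda>t. ennreal (gp t)) = density lborel (\<lambda>t. ennreal (gn t))"
  proof (rule measure_eqI_lessThan)
    show "emeasure (density lborel (\<lambda>t. ennreal (gp t))) {x<..} < \<infinity>" for x
      using emeasure_density_greaterThan[OF igp, of x] by (simp add: gp_def)
    show "emeasure (density lborel (\<lambda>t. ennreal (gp t))) {x<..}
        = emeasure (density lborel (\<lambda>t. ennreal (gn t))) {x<..}" for x
      using emeasure_density_greaterThan[OF igp, of x] emeasure_density_greaterThan[OF ign, of x] eq[of x]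
      by (simp add: gp_def gn_def)
  qed simp_all
  moreover have "integral\<^sup>N lborel (\<lambda>t. ennreal (gp t)) \<noteq> \<infinity>"
    using nn_integral_eq_integral[OF igp] by (simp add: gp_def)
  ultimately have "AE t in lborel. ennreal (gp t) = ennreal (gn t)"
    using finite_density_unique[of "\<lambda>t. ennreal (gp t)" lborel "\<lambda>t. ennreal (gn t)"] by auto
  then show ?thesis
    by (rule eventually_mono) (auto simp: gp_def gn_def max_def split: if_splits)
qed

lemma integral_greaterThan_zero_if_integral_atLeastAtMost_zero:
  fixes f :: "real \<Rightarrow> real"
  assumes int: "integrable lebesgue f"
    and supp: "\<And>t. t \<notin> {0..1} \<Longrightarrow> f t = 0"
    and zero: "\<And>x. x \<in> {0..1} \<Longrightarrow> integral\<^sup>L lebesgue (\<lambda>t. indicator {0..x} t * f t) = 0"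
  shows "integral\<^sup>L lebesgue (\<lambda>t. indicator {a<..} t * f t) = 0"
proof (cases "a < 0")
  case True
  have "integral\<^sup>L lebesgue (\<lambda>t. indicator {a<..} t * f t) = integral\<^sup>L lebesgue (\<lambda>t. indicator {0..1} t * f t)"
    by (intro Bochner_Integration.integral_cong refl) (use True supp in \<open>auto split: split_indicator\<close>)
  then show ?thesis using zero[of 1] by simp
next
  case False
  show ?thesis
  proof (cases "a \<ge> 1")
    case True
    have "(\<lambda>t. indicator {a<..} t * f t) = (\<lambda>t. 0::real)"
      by (rule ext) (use True supp in \<open>auto split: split_indicator\<close>)
    then show ?thesis by simp
  next
    case F2: False
    have "integral\<^sup>L lebesgue (\<lambda>t. indicator {a<..} t * f t)
        = integral\<^sup>L lebesgue (\<lambda>t. f t - f t * indicator {0..a} t)"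
      by (intro Bochner_Integration.integral_cong refl) (use False F2 supp in \<open>auto split: split_indicator\<close>)
    also have "\<dots> = integral\<^sup>L lebesgue f - integral\<^sup>L lebesgue (\<lambda>t. f t * indicator {0..a} t)"
      by (intro Bochner_Integration.integral_diff int integrable_real_mult_indicator) auto
    also have "integral\<^sup>L lebesgue (\<lambda>t. f t * indicator {0..a} t) = 0"
      using zero[of a] False F2 by (simp add: mult.commute)
    also have "integral\<^sup>L lebesgue f = integral\<^sup>L lebesgue (\<lambda>t. indicator {0..1} t * f t)"
      by (intro Bochner_Integration.integral_cong refl) (use supp in \<open>auto split: split_indicator\<close>)
    finally show ?thesis using zero[of 1] by simp
  qed
qed

lemma AE_zero_if_integral_atLeastAtMost_zero:
  fixes f :: "real \<Rightarrow> real"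
  assumes int: "integrable lebesgue f"
    and supp: "\<And>t. t \<notin> {0..1} \<Longrightarrow> f t = 0"
    and zero: "\<And>x. x \<in> {0..1} \<Longrightarrow> integral\<^sup>L lebesgue (\<lambda>t. indicator {0..x} t * f t) = 0"
  shows "AE t in lebesgue. f t = 0"
proof -
  have "f \<in> borel_measurable (completion lborel)" using int by measurable
  then obtain g where g: "g \<in> borel_measurable lborel" "AE t in lborel. f t = g t"
    using completion_ex_borel_measurable_real by blast
  have gL: "AE t in lebesgue. f t = g t" using g(2) by (rule AE_completion)
  have gmL: "g \<in> borel_measurable lebesgue" using g(1) by (rule measurable_completion)
  have igL: "integrable lebesgue g"
    using integrable_cong_AE_imp[OF int gmL gL] .
  have ig: "integrable lborel g" using igL integrable_completion[OF g(1)] by simp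
  have "AE t in lborel. g t = 0"
  proof (rule AE_zero_if_integral_greaterThan_zero[OF ig])
    fix a
    have m1: "(\<lambda>t. indicator {a<..} t * g t) \<in> borel_measurable lborel" using g(1) by measurable
    have "integral\<^sup>L lborel (\<lambda>t. indicator {a<..} t * g t) = integral\<^sup>L lebesgue (\<lambda>t. indicator {a<..} t * g t)"
      using integral_completion[OF m1] by simp
    also have "\<dots> = integral\<^sup>L lebesgue (\<lambda>t. indicator {a<..} t * f t)"
    proof (intro integral_cong_AE)
      have [measurable]: "g \<in> borel_measurable lebesgue" "f \<in> borel_measurable lebesgue" using gmL int by auto
      show "(\<lambda>t. indicator {a<..} t * g t) \<in> borel_measurable lebesgue"
        by (intro borel_measurable_times borel_measurable_indicator gmL) auto
      show "(\<lambda>t. indicator {a<..} t * f t) \<in> borel_measurable lebesgue"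
        by (intro borel_measurable_times borel_measurable_indicator borel_measurable_integrable int) auto
      show "AE x in lebesgue. indicator {a<..} x * g x = indicator {a<..} x * f x"
        using gL by (auto elim: eventually_mono)
    qed
    also have "\<dots> = 0"
      using int supp zero by (rule integral_greaterThan_zero_if_integral_atLeastAtMost_zero)
    finally show "integral\<^sup>L lborel (\<lambda>t. indicator {a<..} t * g t) = 0" .
  qed
  then have "AE t in lborel. f t = 0" using g(2) by eventually_elim auto
  then show ?thesis by (rule AE_completion)
qed

lemma has_weak_deriv_L2on: "has_weak_deriv u g \<Longrightarrow> L2on {0..1} g"
  unfolding has_weak_deriv_def by blast

lemma has_weak_deriv_eq:
  "has_weak_deriv u g \<Longrightarrow> x \<in> {0..1} \<Longrightarrow> u x = u 0 + integral\<^sup>L (lebesgue_on {0..x}) g"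
  unfolding has_weak_deriv_def by blast

lemma has_weak_deriv_unique:
  assumes hg: "has_weak_deriv u g" and hh: "has_weak_deriv u h"
  shows "AE t in lebesgue_on {0..1}. g t = h t"
proof -
  have Lg: "L2on {0..1} g" and Lh: "L2on {0..1} h"
    using has_weak_deriv_L2on[OF hg] has_weak_deriv_L2on[OF hh] .
  define K where "K t = indicator {0..1} t *\<^sub>R (g t - h t)" for t
  have K: "integrable lebesgue (\<lambda>t. indicator {0..x} t *\<^sub>R K t)"
    and K0: "integral\<^sup>L lebesgue (\<lambda>t. indicator {0..x} t *\<^sub>R K t) = 0" if x: "x \<in> {0..1}" for x
  proof -
    have eq: "(\<lambda>t. indicator {0..x} t *\<^sub>R K t) = (\<lambda>t. indicator {0..x} t *\<^sub>R g t - indicator {0..x} t *\<^sub>R h t)"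
      using x by (auto simp: K_def fun_eq_iff split: split_indicator)
    show "integrable lebesgue (\<lambda>t. indicator {0..x} t *\<^sub>R K t)"
      unfolding eq by (intro Bochner_Integration.integrable_diff L2on_integrable_indicator Lg Lh x)
    have "integral\<^sup>L (lebesgue_on {0..x}) g = integral\<^sup>L (lebesgue_on {0..x}) h"
      using has_weak_deriv_eq[OF hg x] has_weak_deriv_eq[OF hh x] by simp
    then show "integral\<^sup>L lebesgue (\<lambda>t. indicator {0..x} t *\<^sub>R K t) = 0"
      unfolding eq using L2on_integrable_indicator[OF Lg x] L2on_integrable_indicator[OF Lh x]
      by (simp add: integral_restrict_space)
  qed
  have K1: "integrable lebesgue K"
    unfolding K_def scaleR_diff_right
    by (intro Bochner_Integration.integrable_diff L2on_integrable_indicator Lg Lh) auto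
  have "AE t in lebesgue. Re (K t) = 0"
  proof (rule AE_zero_if_integral_atLeastAtMost_zero)
    show "integral\<^sup>L lebesgue (\<lambda>t. indicator {0..x} t * Re (K t)) = 0" if "x \<in> {0..1}" for x
      using integral_Re[OF K[OF that]] K0[OF that] by simp
  qed (rule integrable_Re[OF K1], simp add: K_def)
  moreover have "AE t in lebesgue. Im (K t) = 0"
  proof (rule AE_zero_if_integral_atLeastAtMost_zero)
    show "integral\<^sup>L lebesgue (\<lambda>t. indicator {0..x} t * Im (K t)) = 0" if "x \<in> {0..1}" for x
      using integral_Im[OF K[OF that]] K0[OF that] by simp
  qed (rule integrable_Im[OF K1], simp add: K_def)
  ultimately have "AE t in lebesgue. t \<in> {0..1} \<longrightarrow> g t = h t"
    by eventually_elim (auto simp: K_def complex_eq_iff split: split_indicator)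
  then show ?thesis by (simp add: AE_restrict_space_iff)
qed
lemma has_weak_deriv_wderiv: "H1 u \<Longrightarrow> has_weak_deriv u (wderiv u)"
  unfolding H1_def wderiv_def by (erule someI_ex)

lemma has_weak_deriv_add:
  assumes u: "has_weak_deriv u g" and v: "has_weak_deriv v h"
  shows "has_weak_deriv (\<lambda>x. u x + v x) (\<lambda>x. g x + h x)"
  unfolding has_weak_deriv_def
proof (intro conjI ballI)
  show "L2on {0..1} (\<lambda>x. g x + h x)"
    using has_weak_deriv_L2on[OF u] has_weak_deriv_L2on[OF v] by (rule L2on_add)
  fix x :: real assume x: "x \<in> {0..1}"
  have "integral\<^sup>L (lebesgue_on {0..x}) (\<lambda>x. g x + h x)
      = integral\<^sup>L (lebesgue_on {0..x}) g + integral\<^sup>L (lebesgue_on {0..x}) h"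
    using has_weak_deriv_L2on[OF u] has_weak_deriv_L2on[OF v] x
    by (intro Bochner_Integration.integral_add L2on_integrable_on_interval)
  moreover note has_weak_deriv_eq[OF u x] has_weak_deriv_eq[OF v x]
  ultimately show "u x + v x = u 0 + v 0 + integral\<^sup>L (lebesgue_on {0..x}) (\<lambda>x. g x + h x)"
    by (simp only: algebra_simps)
qed

lemma has_weak_deriv_cmult:
  assumes "has_weak_deriv u g"
  shows "has_weak_deriv (\<lambda>x. c * u x) (\<lambda>x. c * g x)"
  unfolding has_weak_deriv_def
proof (intro conjI ballI)
  show "L2on {0..1} (\<lambda>x. c * g x)" using has_weak_deriv_L2on[OF assms] by (rule L2on_cmult)
  fix x :: real assume "x \<in> {0..1}"
  with has_weak_deriv_eq[OF assms] have "u x = u 0 + integral\<^sup>L (lebesgue_on {0..x}) g" .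
  then show "c * u x = c * u 0 + integral\<^sup>L (lebesgue_on {0..x}) (\<lambda>x. c * g x)"
    by (simp only: integral_mult_right_zero distrib_left)
qed

lemma has_weak_deriv_cong:
  assumes "\<forall>x\<in>{0..1}. G x = G' x" "has_weak_deriv G' h"
  shows "has_weak_deriv G h"
  unfolding has_weak_deriv_def
proof (intro conjI ballI)
  show "L2on {0..1} h" using has_weak_deriv_L2on[OF assms(2)] .
  fix x :: real assume x: "x \<in> {0..1}"
  then have "G x = G' x" "G 0 = G' 0" using assms(1) by auto
  with has_weak_deriv_eq[OF assms(2) x] show "G x = G 0 + integral\<^sup>L (lebesgue_on {0..x}) h"
    by simp
qed

lemma H1_add: "H1 u \<Longrightarrow> H1 v \<Longrightarrow> H1 (\<lambda>x. u x + v x)"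
  unfolding H1_def using has_weak_deriv_add by blast

lemma H1_cmult: "H1 u \<Longrightarrow> H1 (\<lambda>x. c * u x)"
  unfolding H1_def using has_weak_deriv_cmult by blast

lemma H1L_add: "H1L u \<Longrightarrow> H1L v \<Longrightarrow> H1L (\<lambda>x. u x + v x)"
  unfolding H1L_def using H1_add by auto

lemma H1L_cmult: "H1L u \<Longrightarrow> H1L (\<lambda>x. c * u x)"
  unfolding H1L_def using H1_cmult by auto

lemma H10_add: "H10 u \<Longrightarrow> H10 v \<Longrightarrow> H10 (\<lambda>x. u x + v x)"
  unfolding H10_def using H1_add by auto

lemma H10_cmult: "H10 u \<Longrightarrow> H10 (\<lambda>x. c * u x)"
  unfolding H10_def using H1_cmult by auto

lemma L2norm2_wderiv_cong:
  assumes "has_weak_deriv u g"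
  shows "L2norm2 {0..1} (wderiv u) = L2norm2 {0..1} g"
proof -
  have u: "has_weak_deriv u (wderiv u)" using assms has_weak_deriv_wderiv H1_def by blast
  show ?thesis
    using has_weak_deriv_unique[OF u assms] has_weak_deriv_L2on[OF u] has_weak_deriv_L2on[OF assms]
    by (rule L2norm2_cong_AE[rotated 2])
qed

lemma L2norm2_wderiv_add:
  "H1 u \<Longrightarrow> H1 v \<Longrightarrow>
    L2norm2 {0..1} (wderiv (\<lambda>x. u x + v x)) = L2norm2 {0..1} (\<lambda>x. wderiv u x + wderiv v x)"
  by (intro L2norm2_wderiv_cong has_weak_deriv_add has_weak_deriv_wderiv)

lemma L2norm2_wderiv_cmult:
  "H1 u \<Longrightarrow> L2norm2 {0..1} (wderiv (\<lambda>x. c * u x)) = (cmod c)^2 * L2norm2 {0..1} (wderiv u)"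
  by (simp add: L2norm2_wderiv_cong[OF has_weak_deriv_cmult[OF has_weak_deriv_wderiv]] L2norm2_cmult)

lemma L2norm2_wderiv_zero [simp]: "L2norm2 {0..1} (wderiv (\<lambda>x. 0)) = 0"
  using L2norm2_wderiv_cong[of "\<lambda>x. 0" "\<lambda>x. 0"] by (simp add: has_weak_deriv_def)

lemma H1_continuous_on:
  assumes "H1 u" shows "continuous_on {0..1} u"
proof -
  obtain g where g: "has_weak_deriv u g" using assms unfolding H1_def by blast
  have "g integrable_on {0..1}"
    using L2on_integrable[OF has_weak_deriv_L2on[OF g]] by (rule integrable_on_lebesgue_on) simp
  then have "continuous_on {0..1} (\<lambda>x. u 0 + integral {0..x} g)"
    by (intro continuous_intros indefinite_integral_continuous_1)
  moreover have "u 0 + integral {0..x} g = u x" if "x \<in> {0..1}" for x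
    using has_weak_deriv_eq[OF g that]
      lebesgue_integral_eq_integral[OF L2on_integrable_on_interval[OF has_weak_deriv_L2on[OF g] that]]
    by simp
  ultimately show ?thesis by (rule continuous_on_eq) auto
qed

lemma continuous_on_AE_eq_imp_eq:
  fixes f g :: "real \<Rightarrow> complex"
  assumes "continuous_on {0..1} f" "continuous_on {0..1} g"
    and "AE t in lebesgue_on {0..1}. f t = g t"
  shows "\<forall>x\<in>{0..1}. f x = g x"
proof -
  have "continuous_on {0..1} (\<lambda>t. cmod (f t - g t))" by (intro continuous_intros assms)
  moreover have "integral\<^sup>L (lebesgue_on {0..1}) (\<lambda>t. cmod (f t - g t)) = 0"
    by (rule integral_eq_zero_AE) (use assms(3) in \<open>auto elim: eventually_mono\<close>)
  ultimately show ?thesis using integralL_eq_0_iff by fastforce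
qed

lemma H1_weak_derivs_agree:
  assumes "has_weak_deriv u g" "H1 g" "has_weak_deriv u g'" "H1 g'"
  shows "\<forall>x\<in>{0..1}. g x = g' x"
  using H1_continuous_on[OF assms(2)] H1_continuous_on[OF assms(4)] has_weak_deriv_unique[OF assms(1,3)]
  by (rule continuous_on_AE_eq_imp_eq)

lemma dx_at1_eq:
  assumes "has_weak_deriv u u'" "H1 u'"
  shows "dx_at1 u = u' 1"
  unfolding dx_at1_def
proof (rule someI2)
  show "\<exists>g. has_weak_deriv u g \<and> H1 g \<and> g 1 = u' 1" using assms by blast
qed (use H1_weak_derivs_agree[OF _ _ assms] in force)

lemma wderiv2_AE_eq:
  assumes u: "has_weak_deriv u u'" and u': "has_weak_deriv u' u''"
  shows "AE t in lebesgue_on {0..1}. wderiv2 u t = u'' t" "L2on {0..1} (wderiv2 u)"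
proof -
  have "H1 u'" using u' unfolding H1_def by blast
  define G where "G = (SOME g. has_weak_deriv u g \<and> H1 g)"
  have G: "has_weak_deriv u G \<and> H1 G"
    unfolding G_def by (rule someI[of _ u']) (use u \<open>H1 u'\<close> in blast)
  then have "has_weak_deriv G u''"
    using H1_weak_derivs_agree[OF _ _ u \<open>H1 u'\<close>, of G] u' by (blast intro: has_weak_deriv_cong)
  moreover have "wderiv2 u = wderiv G" unfolding wderiv2_def G_def ..
  ultimately show "AE t in lebesgue_on {0..1}. wderiv2 u t = u'' t" "L2on {0..1} (wderiv2 u)"
    using has_weak_deriv_unique has_weak_deriv_L2on has_weak_deriv_wderiv G by metis+
qed

lemma has_weak_deriv_smooth:
  fixes U U' :: "real \<Rightarrow> real" and c :: complex
  assumes U: "\<And>x. (U has_real_derivative U' x) (at x)" and U': "continuous_on {0..1} U'"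
  shows "has_weak_deriv (\<lambda>x. c * complex_of_real (U x)) (\<lambda>x. c * complex_of_real (U' x))"
  unfolding has_weak_deriv_def
proof (intro conjI ballI)
  have cont: "continuous_on {0..1} (\<lambda>x. c * complex_of_real (U' x))"
    by (intro continuous_intros U')
  then show "L2on {0..1} (\<lambda>x. c * complex_of_real (U' x))" by (rule L2on_continuous_on)
  fix x :: real assume x: "x \<in> {0..1}"
  have "((\<lambda>t. c * complex_of_real (U' t)) has_integral
        (c * complex_of_real (U x) - c * complex_of_real (U 0))) {0..x}"
  proof (rule fundamental_theorem_of_calculus)
    show "0 \<le> x" using x by simp
    show "((\<lambda>t. c * complex_of_real (U t)) has_vector_derivative c * complex_of_real (U' t))
        (at t within {0..x})" for t
      by (rule has_vector_derivative_mult_right, rule has_vector_derivative_of_real,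
          rule has_field_derivative_at_within, rule U)
  qed
  moreover have "continuous_on {0..x} (\<lambda>x. c * complex_of_real (U' x))"
    by (rule continuous_on_subset[OF cont]) (use x in auto)
  then have "integral\<^sup>L (lebesgue_on {0..x}) (\<lambda>t. c * complex_of_real (U' t))
      = integral {0..x} (\<lambda>t. c * complex_of_real (U' t))"
    by (rule lebesgue_integral_eq_integral[OF continuous_imp_integrable_real]) simp
  ultimately have "integral\<^sup>L (lebesgue_on {0..x}) (\<lambda>t. c * complex_of_real (U' t))
      = c * complex_of_real (U x) - c * complex_of_real (U 0)"
    by (metis integral_unique)
  then show "c * complex_of_real (U x) = c * complex_of_real (U 0)
      + integral\<^sup>L (lebesgue_on {0..x}) (\<lambda>t. c * complex_of_real (U' t))"
    by simp
qed

lemma smooth_weak_derivs: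
  fixes U U' U'' :: "real \<Rightarrow> real" and c :: complex
  assumes d1: "\<And>x. (U has_real_derivative U' x) (at x)"
    and d2: "\<And>x. (U' has_real_derivative U'' x) (at x)"
    and c2: "continuous_on {0..1} U''"
  defines "u \<equiv> \<lambda>x. c * complex_of_real (U x)"
  shows "H1 u" "H2 u" "dx_at1 u = c * complex_of_real (U' 1)"
    "AE t in lebesgue_on {0..1}. wderiv2 u t = c * complex_of_real (U'' t)"
    "L2on {0..1} (wderiv2 u)"
proof -
  define u' where "u' = (\<lambda>x. c * complex_of_real (U' x))"
  have c1: "continuous_on {0..1} U'"
    using d2 by (meson DERIV_isCont continuous_at_imp_continuous_on)
  have h1: "has_weak_deriv u u'" unfolding u_def u'_def by (rule has_weak_deriv_smooth[OF d1 c1])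
  have h2: "has_weak_deriv u' (\<lambda>x. c * complex_of_real (U'' x))"
    unfolding u'_def by (rule has_weak_deriv_smooth[OF d2 c2])
  have "H1 u'" using h2 unfolding H1_def by blast
  show "H1 u" "H2 u" using h1 \<open>H1 u'\<close> unfolding H1_def H2_def by blast+
  show "dx_at1 u = c * complex_of_real (U' 1)" using dx_at1_eq[OF h1 \<open>H1 u'\<close>] by (simp add: u'_def)
  show "AE t in lebesgue_on {0..1}. wderiv2 u t = c * complex_of_real (U'' t)"
    "L2on {0..1} (wderiv2 u)"
    using wderiv2_AE_eq[OF h1 h2] by blast+
qed

lemma sine_sum_weak_derivs:
  fixes A B k j :: real and c :: complex
  defines "u \<equiv> \<lambda>x. c * complex_of_real (A * sin (k * x) + B * sin (j * x))"
  shows "H1 u" "H2 u" "dx_at1 u = c * complex_of_real (A * k * cos k + B * j * cos j)"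
    "AE t in lebesgue_on {0..1}. wderiv2 u t
       = c * complex_of_real (- A * k^2 * sin (k * t) - B * j^2 * sin (j * t))"
    "L2on {0..1} (wderiv2 u)"
proof -
  have d1: "((\<lambda>x. A * sin (k * x) + B * sin (j * x))
      has_real_derivative (A * k * cos (k * x) + B * j * cos (j * x))) (at x)"
    and d2: "((\<lambda>x. A * k * cos (k * x) + B * j * cos (j * x))
      has_real_derivative (- A * k^2 * sin (k * x) - B * j^2 * sin (j * x))) (at x)" for x
    by (auto intro!: derivative_eq_intros simp: algebra_simps power2_eq_square)
  have "continuous_on {0..1} (\<lambda>x. - A * k^2 * sin (k * x) - B * j^2 * sin (j * x))"
    by (intro continuous_intros)
  from smooth_weak_derivs[OF d1 d2 this, of c] show "H1 u" "H2 u"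
    "dx_at1 u = c * complex_of_real (A * k * cos k + B * j * cos j)"
    "AE t in lebesgue_on {0..1}. wderiv2 u t
       = c * complex_of_real (- A * k^2 * sin (k * t) - B * j^2 * sin (j * t))"
    "L2on {0..1} (wderiv2 u)"
    unfolding u_def by simp_all
qed

lemma integral_sin_sq:
  fixes k :: real
  assumes k: "k \<noteq> 0" and s: "sin (2*k) = 0"
  shows "integral\<^sup>L (lebesgue_on {0..1}) (\<lambda>t. (sin (k * t))^2) = 1/2"
proof -
  have d: "((\<lambda>t. t/2 - sin (2*k*t) / (4*k)) has_real_derivative (sin (k * t))^2) (at t)" for t
  proof -
    have "((\<lambda>t. t/2 - sin (2*k*t) / (4*k)) has_real_derivative (1/2 - cos (2*k*t) * (2*k) / (4*k))) (at t)"
      by (auto intro!: derivative_eq_intros simp: algebra_simps)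
    moreover have "1/2 - cos (2*k*t) * (2*k) / (4*k) = (sin (k * t))^2"
      using k cos_double_sin[of "k*t"] by (simp add: field_simps mult.assoc)
    ultimately show ?thesis by simp
  qed
  have "((\<lambda>t. (sin (k * t))^2) has_integral ((1/2 - sin (2*k*1) / (4*k)) - (0/2 - sin (2*k*0) / (4*k)))) {0..1}"
    by (rule fundamental_theorem_of_calculus)
       (auto intro!: has_field_derivative_at_within d simp: has_real_derivative_iff_has_vector_derivative[symmetric])
  then have hi: "((\<lambda>t. (sin (k * t))^2) has_integral (1/2)) {0..1}" using s by simp
  have "integral\<^sup>L (lebesgue_on {0..1}) (\<lambda>t. (sin (k * t))^2) = integral {0..1} (\<lambda>t. (sin (k * t))^2)"
    by (rule lebesgue_integral_eq_integral[OF continuous_imp_integrable_real]) (auto intro!: continuous_intros)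
  also have "\<dots> = 1/2" using hi by (rule integral_unique)
  finally show ?thesis .
qed

section \<open>The energy space\<close>

lemma in_H_add: "in_H p \<Longrightarrow> in_H q \<Longrightarrow> in_H (st_add p q)"
  by (cases p rule: prod_cases5, cases q rule: prod_cases5) (simp add: H1L_add H10_add L2on_add)

lemma in_H_scale: "in_H p \<Longrightarrow> in_H (st_scale c p)"
  by (cases p rule: prod_cases5) (simp add: H1L_cmult H10_cmult L2on_cmult)

lemma sqrt_le_sqrt_add_sqrt:
  fixes X A B :: real
  assumes "0 \<le> A" "0 \<le> B" and bound: "\<And>t. 0 < t \<Longrightarrow> X \<le> (1 + t) * A + (1 + 1/t) * B"
  shows "sqrt X \<le> sqrt A + sqrt B"
proof -
  have approx: "X \<le> (sqrt (A + \<epsilon>) + sqrt (B + \<epsilon>))^2" if "0 < \<epsilon>" for \<epsilon>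
  proof -
    define p q where "p = sqrt (A + \<epsilon>)" and "q = sqrt (B + \<epsilon>)"
    have pq: "0 < p" "0 < q" "A + \<epsilon> = p^2" "B + \<epsilon> = q^2"
      unfolding p_def q_def using assms that by auto
    have "X \<le> (1 + q/p) * A + (1 + 1/(q/p)) * B" using pq by (intro bound) simp
    also have "\<dots> \<le> (1 + q/p) * (A + \<epsilon>) + (1 + 1/(q/p)) * (B + \<epsilon>)"
      using pq that by (intro add_mono mult_left_mono) auto
    also have "\<dots> = (p + q)^2"
      unfolding pq(3,4) using pq(1,2) by (simp add: field_simps power2_eq_square)
    finally show ?thesis unfolding p_def q_def .
  qed
  have "((\<lambda>\<epsilon>. (sqrt (A + \<epsilon>) + sqrt (B + \<epsilon>))^2) \<longlongrightarrow> (sqrt (A + 0) + sqrt (B + 0))^2) (at_right 0)"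
    by (intro tendsto_intros)
  moreover have "\<forall>\<^sub>F \<epsilon> in at_right 0. X \<le> (sqrt (A + \<epsilon>) + sqrt (B + \<epsilon>))^2"
    using eventually_at_right_less[of 0] by eventually_elim (rule approx)
  ultimately have "X \<le> (sqrt A + sqrt B)^2"
    using tendsto_lowerbound by fastforce
  then have "sqrt X \<le> sqrt ((sqrt A + sqrt B)^2)" by (rule real_sqrt_le_mono)
  then show ?thesis using assms by simp
qed

lemma Hnorm_nonneg:
  assumes "0 \<le> a" "0 \<le> \<gamma> * kappa \<alpha>"
  shows "0 \<le> Hnorm a \<gamma> \<alpha> p"
  by (cases p rule: prod_cases5) (simp add: assms L2norm2_nonneg)

lemma Hnorm_scale:
  assumes "in_H p"
  shows "Hnorm a \<gamma> \<alpha> (st_scale c p) = cmod c * Hnorm a \<gamma> \<alpha> p"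
proof (cases p rule: prod_cases5)
  case (fields u v y z w)
  then have "H1 u" "H1 y" using assms by (auto simp: H1L_def H10_def)
  then have "Hnorm a \<gamma> \<alpha> (st_scale c p) = sqrt ((cmod c)^2 * (L2norm2 {0..1} v + L2norm2 {0..1} (wderiv u)
      + L2norm2 {0..1} z + a * L2norm2 {0..1} (wderiv y) + \<gamma> * kappa \<alpha> * L2norm2 UNIV w))"
    unfolding fields by (simp add: L2norm2_cmult L2norm2_wderiv_cmult algebra_simps)
  then show ?thesis unfolding fields by (simp add: real_sqrt_mult)
qed

lemma Hnorm_sq:
  assumes "0 \<le> a" "0 \<le> \<gamma> * kappa \<alpha>"
  shows "(Hnorm a \<gamma> \<alpha> (u, v, y, z, w))^2 = L2norm2 {0..1} v + L2norm2 {0..1} (wderiv u)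
      + L2norm2 {0..1} z + a * L2norm2 {0..1} (wderiv y) + \<gamma> * kappa \<alpha> * L2norm2 UNIV w"
  unfolding Hnorm.simps by (rule real_sqrt_pow2) (simp add: assms L2norm2_nonneg)

lemma Hnorm_add_sq_le:
  assumes a: "0 \<le> a" and \<gamma>: "0 \<le> \<gamma> * kappa \<alpha>" and "in_H p" "in_H q" "0 < t"
  shows "(Hnorm a \<gamma> \<alpha> (st_add p q))^2 \<le> (1 + t) * (Hnorm a \<gamma> \<alpha> p)^2 + (1 + 1/t) * (Hnorm a \<gamma> \<alpha> q)^2"
proof -
  obtain u v y z w where p: "p = (u, v, y, z, w)" by (rule prod_cases5)
  obtain u' v' y' z' w' where q: "q = (u', v', y', z', w')" by (rule prod_cases5)
  have H1: "H1 u" "H1 u'" "H1 y" "H1 y'" using assms p q by (auto simp: H1L_def H10_def)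
  then have "L2on {0..1} (wderiv u)" "L2on {0..1} (wderiv u')"
    "L2on {0..1} (wderiv y)" "L2on {0..1} (wderiv y')"
    by (auto intro: has_weak_deriv_L2on has_weak_deriv_wderiv)
  moreover have "L2on {0..1} v" "L2on {0..1} v'" "L2on {0..1} z" "L2on {0..1} z'"
    "L2on UNIV w" "L2on UNIV w'"
    using assms p q by auto
  ultimately have "(Hnorm a \<gamma> \<alpha> (st_add p q))^2
      \<le> ((1 + t) * L2norm2 {0..1} v + (1 + 1/t) * L2norm2 {0..1} v')
        + ((1 + t) * L2norm2 {0..1} (wderiv u) + (1 + 1/t) * L2norm2 {0..1} (wderiv u'))
        + ((1 + t) * L2norm2 {0..1} z + (1 + 1/t) * L2norm2 {0..1} z')
        + a * ((1 + t) * L2norm2 {0..1} (wderiv y) + (1 + 1/t) * L2norm2 {0..1} (wderiv y'))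
        + \<gamma> * kappa \<alpha> * ((1 + t) * L2norm2 UNIV w + (1 + 1/t) * L2norm2 UNIV w')"
    unfolding p q st_add.simps Hnorm_sq[OF a \<gamma>] L2norm2_wderiv_add[OF H1(1,2)] L2norm2_wderiv_add[OF H1(3,4)]
    by (intro add_mono mult_left_mono L2norm2_add_le \<open>0 < t\<close> a \<gamma>)
  also have "\<dots> = (1 + t) * (Hnorm a \<gamma> \<alpha> p)^2 + (1 + 1/t) * (Hnorm a \<gamma> \<alpha> q)^2"
    unfolding p q Hnorm_sq[OF a \<gamma>] by (simp add: algebra_simps)
  finally show ?thesis .
qed

lemma Hnorm_triangle:
  assumes "0 \<le> a" "0 \<le> \<gamma> * kappa \<alpha>" "in_H p" "in_H q"
  shows "Hnorm a \<gamma> \<alpha> (st_add p q) \<le> Hnorm a \<gamma> \<alpha> p + Hnorm a \<gamma> \<alpha> q"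
proof -
  have "sqrt ((Hnorm a \<gamma> \<alpha> (st_add p q))^2) \<le> sqrt ((Hnorm a \<gamma> \<alpha> p)^2) + sqrt ((Hnorm a \<gamma> \<alpha> q)^2)"
    using Hnorm_add_sq_le[OF assms] by (intro sqrt_le_sqrt_add_sqrt) auto
  then show ?thesis using Hnorm_nonneg[OF assms(1,2)] by simp
qed

lemma energy_space_seminormed:
  assumes "0 \<le> a" "0 \<le> \<gamma> * kappa \<alpha>"
  shows "seminormed_state_space in_H (Hnorm a \<gamma> \<alpha>)"
  by unfold_locales (use assms in \<open>auto intro: in_H_add in_H_scale Hnorm_triangle Hnorm_scale Hnorm_nonneg\<close>)

section \<open>Quasimodes\<close>

locale quasimode =
  fixes s b :: real and n :: nat
  assumes s_pos: "0 < s" and s_ne_1: "s \<noteq> 1" and n_pos: "1 \<le> n"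
begin

definition "m = nat \<lceil>real n * s\<rceil>"
definition "k1 = real n * pi"
definition "k2 = real m * pi"
definition "lam = s * k1"
definition "e = \<bar>s^2 - 1\<bar>"

(* c1 cancels the sin(k1 x) part of the u-residual, c2 then enforces u_x(1) = 0 *)
definition "c1 = lam * b / (lam^2 - k1^2)"
definition "c2 = - c1 * k1 * cos k1 / (k2 * cos k2)"

definition "U x = c1 * sin (k1 * x) + c2 * sin (k2 * x)"
definition "mode_u x = \<i> * complex_of_real (U x)"
definition "mode_y x = complex_of_real (sin (k1 * x))"
definition "mode = (mode_u, \<lambda>x. \<i> * complex_of_real lam * mode_u x,
                    mode_y, \<lambda>x. \<i> * complex_of_real lam * mode_y x, \<lambda>\<xi>. 0)"

lemma m_bounds: "real n * s \<le> real m" "real m < real n * s + 1"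
proof -
  have "real m = of_int \<lceil>real n * s\<rceil>" unfolding m_def using s_pos by simp
  then show "real n * s \<le> real m" "real m < real n * s + 1" by linarith+
qed

lemma m_pos: "0 < real m"
proof -
  have "0 < real n * s" using s_pos n_pos by simp
  then show ?thesis using m_bounds(1) by linarith
qed

lemma e_pos: "0 < e"
  using s_pos s_ne_1 power2_eq_1_iff[of s] unfolding e_def by auto

lemma lam_pos: "0 < lam"
  unfolding lam_def k1_def using s_pos n_pos by simp

lemma lam_sq_minus_k1_sq: "lam^2 - k1^2 = k1^2 * (s^2 - 1)"
  unfolding lam_def by (simp add: algebra_simps power_mult_distrib)

lemma c1_eq: "c1 * (lam^2 - k1^2) = lam * b"
  unfolding c1_def lam_sq_minus_k1_sq using e_pos n_pos unfolding e_def k1_def by auto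

lemma k1_pos: "0 < k1"
  unfolding k1_def using n_pos by simp

lemma abs_c1: "\<bar>c1\<bar> = s * \<bar>b\<bar> / (k1 * e)"
proof -
  have "\<bar>c1\<bar> = \<bar>lam * b\<bar> / (k1^2 * e)"
    unfolding c1_def lam_sq_minus_k1_sq e_def by (simp add: abs_mult abs_divide)
  also have "\<dots> = s * \<bar>b\<bar> / (k1 * e)"
    unfolding lam_def using s_pos k1_pos by (simp add: abs_mult power2_eq_square)
  finally show ?thesis .
qed

lemma abs_c2: "\<bar>c2\<bar> = s * \<bar>b\<bar> / (k2 * e)"
proof -
  have "\<bar>cos k1\<bar> = 1" "\<bar>cos k2\<bar> = 1" unfolding k1_def k2_def by simp_all
  then have "\<bar>c2\<bar> = \<bar>c1\<bar> * k1 / k2"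
    unfolding c2_def using m_pos n_pos by (simp add: abs_mult abs_divide k1_def k2_def)
  then show ?thesis unfolding abs_c1 using n_pos by (simp add: k1_def)
qed

lemma dx_U_at_1: "c1 * k1 * cos k1 + c2 * k2 * cos k2 = 0"
  unfolding c2_def k2_def using m_pos by simp

lemma residual_u_coeff_bound: "\<bar>c2 * (lam^2 - k2^2)\<bar> \<le> 2 * pi * s * \<bar>b\<bar> / e"
proof -
  have "lam \<le> k2" unfolding lam_def k1_def k2_def using m_bounds(1) by (simp add: mult_ac)
  then have "lam^2 \<le> k2^2" using lam_pos by (intro power_mono) auto
  then have "\<bar>lam^2 - k2^2\<bar> = k2^2 - lam^2" by simp
  also have "\<dots> = pi^2 * ((real m - real n * s) * (real m + real n * s))"
    unfolding lam_def k1_def k2_def by (simp add: power2_eq_square algebra_simps)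
  also have "\<dots> \<le> pi^2 * (1 * (2 * real m))"
    using m_bounds s_pos by (intro mult_left_mono mult_mono) auto
  finally have "\<bar>c2\<bar> * \<bar>lam^2 - k2^2\<bar> \<le> \<bar>c2\<bar> * (pi^2 * (2 * real m))"
    by (intro mult_left_mono) auto
  also have "\<dots> = 2 * pi * s * \<bar>b\<bar> / e"
    unfolding abs_c2 k2_def using m_pos e_pos by (simp add: field_simps power2_eq_square)
  finally show ?thesis by (simp add: abs_mult)
qed

lemma residual_y_coeff_bound: "lam * \<bar>b\<bar> * (\<bar>c1\<bar> + \<bar>c2\<bar>) \<le> s^2 * \<bar>b\<bar>^2 * (1 + 1/s) / e"
proof -
  obtain B where B: "\<bar>b\<bar> = B" by simp
  have "lam * B * (s * B / (k1 * e) + s * B / (k2 * e)) = s^2 * B^2 * (1 + real n / real m) / e"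
    unfolding lam_def k1_def k2_def using n_pos m_pos e_pos by (simp add: field_simps power2_eq_square)
  then have "lam * \<bar>b\<bar> * (\<bar>c1\<bar> + \<bar>c2\<bar>) = s^2 * \<bar>b\<bar>^2 * (1 + real n / real m) / e"
    unfolding abs_c1 abs_c2 B .
  also have "\<dots> \<le> s^2 * \<bar>b\<bar>^2 * (1 + 1/s) / e"
    using m_bounds(1) s_pos m_pos e_pos by (intro divide_right_mono mult_left_mono) (auto simp: field_simps)
  finally show ?thesis .
qed

lemma mode_u_weak_derivs:
  "H1 mode_u" "H2 mode_u" "dx_at1 mode_u = 0"
  "AE t in lebesgue_on {0..1}. wderiv2 mode_u t
     = \<i> * complex_of_real (- c1 * k1^2 * sin (k1 * t) - c2 * k2^2 * sin (k2 * t))"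
  "L2on {0..1} (wderiv2 mode_u)"
  using sine_sum_weak_derivs[of \<i> c1 k1 c2 k2] dx_U_at_1
  unfolding mode_u_def[abs_def] U_def by simp_all

lemma mode_y_weak_derivs:
  "H1 mode_y" "H2 mode_y"
  "AE t in lebesgue_on {0..1}. wderiv2 mode_y t = complex_of_real (- (k1^2 * sin (k1 * t)))"
  "L2on {0..1} (wderiv2 mode_y)"
  using sine_sum_weak_derivs[of 1 1 k1 0 k1] unfolding mode_y_def[abs_def] by simp_all

lemma mode_boundary_values: "mode_u 0 = 0" "mode_u 1 = 0" "mode_y 0 = 0" "mode_y 1 = 0"
  unfolding mode_u_def mode_y_def U_def k1_def k2_def by simp_all

lemma mode_continuous_on: "continuous_on {0..1} mode_u" "continuous_on {0..1} mode_y"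
  unfolding mode_u_def[abs_def] mode_y_def[abs_def] U_def by (intro continuous_intros)+

lemma mode_in_H: "in_H mode"
  using mode_u_weak_derivs mode_y_weak_derivs mode_boundary_values mode_continuous_on
  unfolding mode_def by (simp add: H1L_def H10_def L2on_continuous_on L2on_cmult)

lemma mode_in_DA: "in_DA \<gamma> \<alpha> \<eta> mode"
  using mode_in_H mode_u_weak_derivs mode_y_weak_derivs mode_boundary_values
  unfolding mode_def by (simp add: H1L_def H10_def H1_cmult del: in_H.simps)

lemma opA_mode_in_H: "in_H (opA (s^2) b \<alpha> \<eta> mode)"
  using mode_u_weak_derivs mode_y_weak_derivs mode_boundary_values mode_continuous_on
  unfolding mode_def
  by (simp add: H1L_def H10_def H1_cmult L2on_continuous_on L2on_cmult L2on_add L2on_diff)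

lemma Hnorm_mode_ge:
  assumes "0 \<le> \<gamma> * kappa \<alpha>"
  shows "lam / sqrt 2 \<le> Hnorm (s^2) \<gamma> \<alpha> mode"
proof -
  have "2 * k1 = real (2 * n) * pi" unfolding k1_def by simp
  then have "sin (2 * k1) = 0" by (simp only: sin_npi)
  then have "L2norm2 {0..1} mode_y = 1/2"
    using integral_sin_sq[of k1] k1_pos unfolding L2norm2_def mode_y_def by simp
  then have "L2norm2 {0..1} (\<lambda>x. \<i> * complex_of_real lam * mode_y x) = lam^2 / 2"
    by (simp add: L2norm2_cmult norm_mult)
  then have "lam^2 / 2 \<le> L2norm2 {0..1} (\<lambda>x. \<i> * complex_of_real lam * mode_u x)
      + L2norm2 {0..1} (wderiv mode_u) + L2norm2 {0..1} (\<lambda>x. \<i> * complex_of_real lam * mode_y x)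
      + s^2 * L2norm2 {0..1} (wderiv mode_y) + \<gamma> * kappa \<alpha> * L2norm2 UNIV (\<lambda>\<xi>. 0)"
    using assms by (simp add: L2norm2_nonneg)
  then have "sqrt (lam^2 / 2) \<le> Hnorm (s^2) \<gamma> \<alpha> mode"
    unfolding mode_def Hnorm.simps by (rule real_sqrt_le_mono)
  then show ?thesis using lam_pos by (simp add: real_sqrt_divide)
qed

lemma residual_u_AE:
  "AE t in lebesgue_on {0..1}.
     wderiv2 mode_u t - b * (\<i> * lam * mode_y t) - \<i> * lam * (\<i> * lam * mode_u t)
       = \<i> * complex_of_real (c2 * (lam^2 - k2^2) * sin (k2 * t))"
  using mode_u_weak_derivs(4)
proof (rule eventually_mono)
  fix t
  have "- c1 * k1^2 * sin (k1 * t) - c2 * k2^2 * sin (k2 * t) - b * lam * sin (k1 * t) + lam^2 * U t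
      = sin (k1 * t) * (c1 * (lam^2 - k1^2) - lam * b) + c2 * (lam^2 - k2^2) * sin (k2 * t)"
    unfolding U_def by (simp add: algebra_simps)
  then have "- c1 * k1^2 * sin (k1 * t) - c2 * k2^2 * sin (k2 * t) - b * lam * sin (k1 * t) + lam^2 * U t
      = c2 * (lam^2 - k2^2) * sin (k2 * t)"
    using c1_eq by simp
  then show "wderiv2 mode_u t = \<i> * complex_of_real (- c1 * k1^2 * sin (k1 * t) - c2 * k2^2 * sin (k2 * t))
    \<Longrightarrow> wderiv2 mode_u t - b * (\<i> * lam * mode_y t) - \<i> * lam * (\<i> * lam * mode_u t)
       = \<i> * complex_of_real (c2 * (lam^2 - k2^2) * sin (k2 * t))"
    unfolding mode_u_def mode_y_def by (simp add: complex_eq_iff algebra_simps power2_eq_square)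
qed

lemma residual_y_AE:
  "AE t in lebesgue_on {0..1}.
     s^2 * wderiv2 mode_y t + b * (\<i> * lam * mode_u t) - \<i> * lam * (\<i> * lam * mode_y t)
       = complex_of_real (- b * lam * U t)"
  using mode_y_weak_derivs(3)
proof (rule eventually_mono)
  fix t
  have "lam^2 = s^2 * k1^2" unfolding lam_def by (simp add: power_mult_distrib)
  then show "wderiv2 mode_y t = complex_of_real (- (k1^2 * sin (k1 * t)))
    \<Longrightarrow> s^2 * wderiv2 mode_y t + b * (\<i> * lam * mode_u t) - \<i> * lam * (\<i> * lam * mode_y t)
       = complex_of_real (- b * lam * U t)"
    unfolding mode_u_def mode_y_def by (simp add: complex_eq_iff algebra_simps power2_eq_square)
qed

lemma residual_eq:
  "st_diff (opA (s^2) b \<alpha> \<eta> mode) (st_scale (\<i> * complex_of_real lam) mode)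
   = (\<lambda>x. 0,
      \<lambda>t. wderiv2 mode_u t - b * (\<i> * lam * mode_y t) - \<i> * lam * (\<i> * lam * mode_u t),
      \<lambda>x. 0,
      \<lambda>t. s^2 * wderiv2 mode_y t + b * (\<i> * lam * mode_u t) - \<i> * lam * (\<i> * lam * mode_y t),
      \<lambda>\<xi>. 0)"
  unfolding mode_def st_diff_def by (simp add: fun_eq_iff mode_boundary_values)

lemma Hnorm_residual_le:
  "Hnorm (s^2) \<gamma> \<alpha> (st_diff (opA (s^2) b \<alpha> \<eta> mode) (st_scale (\<i> * complex_of_real lam) mode))
     \<le> sqrt ((2 * pi * s * \<bar>b\<bar> / e)^2 + (s^2 * \<bar>b\<bar>^2 * (1 + 1/s) / e)^2)"
proof -
  define r2 where "r2 t = wderiv2 mode_u t - b * (\<i> * lam * mode_y t) - \<i> * lam * (\<i> * lam * mode_u t)" for t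
  define r4 where "r4 t = s^2 * wderiv2 mode_y t + b * (\<i> * lam * mode_u t) - \<i> * lam * (\<i> * lam * mode_y t)" for t
  define n2 where "n2 t = \<i> * complex_of_real (c2 * (lam^2 - k2^2) * sin (k2 * t))" for t
  define n4 where "n4 t = complex_of_real (- b * lam * U t)" for t
  have cont: "continuous_on {0..1} n2" "continuous_on {0..1} n4"
    unfolding n2_def[abs_def] n4_def[abs_def] U_def by (intro continuous_intros)+
  have cmult: "L2on {0..1} (\<lambda>t. c * (d * f t))" if "continuous_on {0..1} f" for c d f
    using L2on_cmult[OF L2on_cmult[OF L2on_continuous_on[OF that]]] .
  have "L2on {0..1} r2" "L2on {0..1} r4"
    unfolding r2_def[abs_def] r4_def[abs_def]
    by (intro L2on_diff L2on_add cmult L2on_cmult mode_u_weak_derivs(5) mode_y_weak_derivs(4)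
        mode_continuous_on)+
  then have "L2norm2 {0..1} r2 = L2norm2 {0..1} n2" "L2norm2 {0..1} r4 = L2norm2 {0..1} n4"
    using L2norm2_cong_AE[OF _ L2on_continuous_on[OF cont(1)] residual_u_AE[folded r2_def n2_def]]
      L2norm2_cong_AE[OF _ L2on_continuous_on[OF cont(2)] residual_y_AE[folded r4_def n4_def]]
    by blast+
  moreover have "L2norm2 {0..1} n2 \<le> (2 * pi * s * \<bar>b\<bar> / e)^2"
  proof (rule L2norm2_le_sq_bound[OF cont(1)])
    fix t
    have "cmod (n2 t) = \<bar>c2 * (lam^2 - k2^2)\<bar> * \<bar>sin (k2 * t)\<bar>"
      unfolding n2_def by (simp only: norm_mult norm_ii norm_of_real mult_1 abs_mult)
    also have "\<dots> \<le> \<bar>c2 * (lam^2 - k2^2)\<bar> * 1" by (intro mult_left_mono) auto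
    finally show "cmod (n2 t) \<le> 2 * pi * s * \<bar>b\<bar> / e" using residual_u_coeff_bound by linarith
  qed
  moreover have "L2norm2 {0..1} n4 \<le> (s^2 * \<bar>b\<bar>^2 * (1 + 1/s) / e)^2"
  proof (rule L2norm2_le_sq_bound[OF cont(2)])
    fix t
    have "\<bar>U t\<bar> \<le> \<bar>c1\<bar> * \<bar>sin (k1 * t)\<bar> + \<bar>c2\<bar> * \<bar>sin (k2 * t)\<bar>"
      unfolding U_def abs_mult[symmetric] by (rule abs_triangle_ineq)
    also have "\<dots> \<le> \<bar>c1\<bar> * 1 + \<bar>c2\<bar> * 1" by (intro add_mono mult_left_mono) auto
    finally have "\<bar>b\<bar> * lam * \<bar>U t\<bar> \<le> \<bar>b\<bar> * lam * (\<bar>c1\<bar> + \<bar>c2\<bar>)"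
      using lam_pos by (intro mult_left_mono) auto
    moreover have "cmod (n4 t) = \<bar>b\<bar> * lam * \<bar>U t\<bar>"
      unfolding n4_def using lam_pos by (simp only: norm_of_real abs_mult abs_minus abs_of_pos)
    ultimately show "cmod (n4 t) \<le> s^2 * \<bar>b\<bar>^2 * (1 + 1/s) / e"
      using residual_y_coeff_bound by (simp add: mult_ac)
  qed
  ultimately have "L2norm2 {0..1} r2 + L2norm2 {0..1} r4
      \<le> (2 * pi * s * \<bar>b\<bar> / e)^2 + (s^2 * \<bar>b\<bar>^2 * (1 + 1/s) / e)^2"
    by linarith
  then show ?thesis
    unfolding residual_eq r2_def[abs_def, symmetric] r4_def[abs_def, symmetric] by simp
qed

end

lemma energy_resolvent_unbounded_on_imag_axis:
  assumes "0 < a" "a \<noteq> 1" "0 \<le> \<gamma> * kappa \<alpha>"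
  shows "\<not> resolvent_bounded_on_imag_axis in_H (Hnorm a \<gamma> \<alpha>) (in_DA \<gamma> \<alpha> \<eta>) (opA a b \<alpha> \<eta>)"
proof
  assume "resolvent_bounded_on_imag_axis in_H (Hnorm a \<gamma> \<alpha>) (in_DA \<gamma> \<alpha> \<eta>) (opA a b \<alpha> \<eta>)"
  then obtain C where C: "\<And>x l. in_DA \<gamma> \<alpha> \<eta> x \<Longrightarrow> in_H x \<Longrightarrow> in_H (opA a b \<alpha> \<eta> x) \<Longrightarrow>
      Hnorm a \<gamma> \<alpha> x \<le> C * Hnorm a \<gamma> \<alpha> (st_diff (opA a b \<alpha> \<eta> x) (st_scale (\<i> * complex_of_real l) x))"
    unfolding resolvent_bounded_on_imag_axis_def by blast
  define s where "s = sqrt a"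
  have s: "0 < s" "s \<noteq> 1" "a = s^2" unfolding s_def using assms(1,2) by auto
  define R where "R = sqrt ((2 * pi * s * \<bar>b\<bar> / \<bar>s^2 - 1\<bar>)^2 + (s^2 * \<bar>b\<bar>^2 * (1 + 1/s) / \<bar>s^2 - 1\<bar>)^2)"
  obtain k :: nat where "\<bar>C\<bar> * R * sqrt 2 / (pi * s) < real k" using reals_Archimedean2 by blast
  then have "\<bar>C\<bar> * R * sqrt 2 < real k * pi * s" using s by (simp add: field_simps)
  also have "\<dots> \<le> real (Suc k) * pi * s" using s by (intro mult_right_mono) auto
  finally have "\<bar>C\<bar> * R * sqrt 2 < real (Suc k) * pi * s" .
  interpret quasimode s b "Suc k" using s by unfold_locales auto
  have "lam / sqrt 2 \<le> Hnorm a \<gamma> \<alpha> mode"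
    using Hnorm_mode_ge assms(3) s by simp
  also have "\<dots> \<le> C * Hnorm a \<gamma> \<alpha> (st_diff (opA a b \<alpha> \<eta> mode) (st_scale (\<i> * complex_of_real lam) mode))"
    using C mode_in_DA mode_in_H opA_mode_in_H s by simp
  also have "\<dots> \<le> \<bar>C\<bar> * R"
    using Hnorm_residual_le[of \<gamma> \<alpha> \<eta>] Hnorm_nonneg[OF _ assms(3)] s
    unfolding R_def e_def by (intro mult_mono abs_ge_self) auto
  also have "\<dots> < lam / sqrt 2"
    using \<open>\<bar>C\<bar> * R * sqrt 2 < real (Suc k) * pi * s\<close> unfolding lam_def k1_def by (simp add: field_simps)
  finally show False by simp
qed

theorem theorem3p3:
  fixes \<alpha> \<eta> \<gamma> a b :: real and T :: "real \<Rightarrow> st \<Rightarrow> st"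
  assumes "0 < \<alpha>" "\<alpha> < 1" "\<eta> > 0" "\<gamma> > 0" "a > 0" "a \<noteq> 1" "b \<noteq> 0"
    and "\<forall>k1 k2 :: int. (k1, k2) \<noteq> (0, 0) \<longrightarrow>
           b^2 \<noteq> ((of_int k1)^2 - a * (of_int k2)^2) * (a * (of_int k1)^2 - (of_int k2)^2)
                 / ((a + 1) * ((of_int k1)^2 + (of_int k2)^2)) * pi^2"
    and "C0_contraction_sg_gen in_H (Hnorm a \<gamma> \<alpha>) (in_DA \<gamma> \<alpha> \<eta>) (opA a b \<alpha> \<eta>) T"
  shows "\<not> unif_exp_stable in_H (Hnorm a \<gamma> \<alpha>) T"
proof
  assume "unif_exp_stable in_H (Hnorm a \<gamma> \<alpha>) T"
  have "0 < kappa \<alpha>" unfolding kappa_def using assms(1,2) by (simp add: sin_gt_zero)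
  then have \<gamma>: "0 \<le> \<gamma> * kappa \<alpha>" using assms(4) by simp
  interpret contraction_semigroup in_H "Hnorm a \<gamma> \<alpha>" "in_DA \<gamma> \<alpha> \<eta>" "opA a b \<alpha> \<eta>" T
    using energy_space_seminormed[OF _ \<gamma>] assms(5,9)
    by (simp add: contraction_semigroup_def contraction_semigroup_axioms_def)
  have "resolvent_bounded_on_imag_axis in_H (Hnorm a \<gamma> \<alpha>) (in_DA \<gamma> \<alpha> \<eta>) (opA a b \<alpha> \<eta>)"
    by (rule resolvent_bounded_if_unif_exp_stable) fact
  with energy_resolvent_unbounded_on_imag_axis[OF assms(5,6) \<gamma>] show False by blast
qed

end
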